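(* Let $D$ be a unique factorization domain and let $m$ be a nonzero element of $D$. Then $\tau_m=P_{J(m)}$, and consequently $\tau_m$ is a congruence on $D_{mult}$ such that the factor semigroup $D_{mult}/\tau_m$ satisfies Condition $( * )$.
   Context: $D_{mult}$ denotes the multiplicative semigroup of $D$; $e$ is the identity of $D$. For $a,b\in D$, $a\sim b$ means $a$ and $b$ are associates. $J(m)=mD$ is the ideal of $D$ generated by $m$ (it is also an ideal of $D_{mult}$). For $m\in D$, $\tau_m$ is the relation on $D$ given by $(a,b)\in\tau_m$ iff $\gcd(a,m)\sim\gcd(b,m)$. For a semigroup $S$, $H\subseteq S$ and $a\in S$, let $H\dots a=\{(x,y)\in S\times S: xay\in H\}$, and $P_H=\{(a,b)\in S\times S: H\dots a=H\dots b\}$ (the principal congruence defined by $H$); here $P_{J(m)}$ is computed in $S=D_{mult}$. For a commutative semigroup $S$ with zero $0$, $A(s)=\{x\in S: xs=0\}$. A semigroup $S$ satisfies Condition $( * )$ if: (1) $S$ is a commutative monoid with a zero; (2) $A(s)\neq\{0\}$ for every non-identity $s\in S$; (3) $A(s)=A(t)$ implies $s=t$ for all $s,t\in S$. *)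

theory Defs
  imports "HOL-Computational_Algebra.Computational_Algebra"
begin

definition assoc_el :: "'a::comm_semiring_1 \<Rightarrow> 'a \<Rightarrow> bool" where
  "assoc_el a b \<longleftrightarrow> a dvd b \<and> b dvd a"

definition tau :: "'a::factorial_ring_gcd \<Rightarrow> ('a \<times> 'a) set" where
  "tau m = {(a, b). assoc_el (gcd a m) (gcd b m)}"

definition J :: "'a::comm_semiring_1 \<Rightarrow> 'a set" where
  "J m = {m * x | x. True}"

definition res :: "'a::semigroup_mult set \<Rightarrow> 'a \<Rightarrow> ('a \<times> 'a) set" where
  "res H a = {(x, y). x * a * y \<in> H}"

definition P :: "'a::semigroup_mult set \<Rightarrow> ('a \<times> 'a) set" where
  "P H = {(a, b). res H a = res H b}"

definition mult_congruence :: "('a::semigroup_mult \<times> 'a) set \<Rightarrow> bool" where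
  "mult_congruence r \<longleftrightarrow> equiv UNIV r \<and>
     (\<forall>a b c. (a, b) \<in> r \<longrightarrow> (a * c, b * c) \<in> r \<and> (c * a, c * b) \<in> r)"

definition quot_mult :: "('a::semigroup_mult \<times> 'a) set \<Rightarrow> 'a set \<Rightarrow> 'a set \<Rightarrow> 'a set" where
  "quot_mult r X Y = (\<Union>x\<in>X. \<Union>y\<in>Y. r `` {x * y})"

definition annih :: "'b set \<Rightarrow> ('b \<Rightarrow> 'b \<Rightarrow> 'b) \<Rightarrow> 'b \<Rightarrow> 'b \<Rightarrow> 'b set" where
  "annih S f z s = {x \<in> S. f x s = z}"

definition cond_star :: "'b set \<Rightarrow> ('b \<Rightarrow> 'b \<Rightarrow> 'b) \<Rightarrow> bool" where
  "cond_star S f \<longleftrightarrow>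
     (\<forall>x\<in>S. \<forall>y\<in>S. f x y \<in> S) \<and>
     (\<forall>x\<in>S. \<forall>y\<in>S. \<forall>w\<in>S. f (f x y) w = f x (f y w)) \<and>
     (\<exists>e\<in>S. \<exists>z\<in>S.
        (\<forall>x\<in>S. \<forall>y\<in>S. f x y = f y x) \<and>
        (\<forall>x\<in>S. f e x = x \<and> f x e = x) \<and>
        (\<forall>x\<in>S. f z x = z \<and> f x z = z) \<and>
        (\<forall>s\<in>S. s \<noteq> e \<longrightarrow> annih S f z s \<noteq> {z}) \<and>
        (\<forall>s\<in>S. \<forall>t\<in>S. annih S f z s = annih S f z t \<longrightarrow> s = t))"

end

theory Submission
  imports Defs
begin

text \<open>Since \<open>m dvd x * a \<longleftrightarrow> m dvd x * gcd a m\<close>, the ideal quotient \<open>{x. m dvd x * a}\<close>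
  is the principal ideal generated by \<open>m div gcd a m\<close>; hence two elements have the same
  ideal quotient iff their gcds with \<open>m\<close> agree. The ideal quotient is exactly what
  \<open>P (J m)\<close> compares, so \<open>tau m = P (J m)\<close>, and a principal congruence is a congruence.
  In the factor semigroup the annihilator of the class of \<open>a\<close> consists of the classes of
  the ideal quotient of \<open>a\<close>, so annihilators separate classes, and a class with
  \<open>gcd a m \<noteq> 1\<close> is annihilated by the nonzero class of \<open>m div gcd a m\<close>.\<close>

lemma dvd_mult_iff_dvd_mult_gcd:
  fixes m :: "'a::semiring_gcd"
  shows "m dvd x * a \<longleftrightarrow> m dvd x * gcd a m"
proof -
  have "m dvd x * a \<longleftrightarrow> m dvd gcd (x * a) (x * m)" by simp
  also have "\<dots> \<longleftrightarrow> m dvd x * gcd a m" by (simp only: gcd_mult_left dvd_normalize_iff)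
  finally show ?thesis .
qed

lemma dvd_cofactor_mult_iff:
  fixes m :: "'a::semiring_gcd"
  assumes "m \<noteq> 0" and "d dvd m"
  shows "m dvd m div d * y \<longleftrightarrow> d dvd y"
proof -
  have "m div d \<noteq> 0" using assms by (simp add: dvd_div_eq_0_iff)
  moreover have "m = m div d * d" using assms(2) by simp
  ultimately show ?thesis by (metis dvd_times_left_cancel_iff)
qed

lemma all_dvd_mult_iff_gcd_eq:
  fixes m :: "'a::semiring_gcd"
  assumes "m \<noteq> 0"
  shows "(\<forall>x. m dvd x * a \<longleftrightarrow> m dvd x * b) \<longleftrightarrow> gcd a m = gcd b m"
proof
  assume same: "\<forall>x. m dvd x * a \<longleftrightarrow> m dvd x * b"
  have "gcd a m dvd gcd b m" if "\<forall>x. m dvd x * a \<longrightarrow> m dvd x * b" for a b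
  proof -
    have "m dvd m div gcd a m * gcd a m" by simp
    then have "m dvd m div gcd a m * gcd b m"
      using that by (simp only: dvd_mult_iff_dvd_mult_gcd[symmetric])
    then show ?thesis using assms by (simp add: dvd_cofactor_mult_iff)
  qed
  then show "gcd a m = gcd b m" using same by (metis gcd_dvd_antisym)
qed (simp add: dvd_mult_iff_dvd_mult_gcd[of m _ a] dvd_mult_iff_dvd_mult_gcd[of m _ b])

lemma zero_divisor_mod_if_not_coprime:
  fixes m :: "'a::semiring_gcd"
  assumes "m \<noteq> 0" and "\<not> coprime a m"
  shows "\<exists>x. m dvd x * a \<and> \<not> m dvd x"
proof (intro exI conjI)
  show "m dvd m div gcd a m * a"
    by (simp add: dvd_mult_iff_dvd_mult_gcd[of m _ a])
  show "\<not> m dvd m div gcd a m"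
    using dvd_cofactor_mult_iff[OF assms(1), of "gcd a m" 1] assms(2)
    by (simp add: coprime_iff_gcd_eq_1)
qed

lemma mult_congruence_P: "mult_congruence (P H)"
proof -
  have "res H (a * c) = res H (b * c) \<and> res H (c * a) = res H (c * b)"
    if "res H a = res H b" for a b c
  proof -
    have shift: "(x, y) \<in> res H (a * c) \<longleftrightarrow> (x, c * y) \<in> res H a"
      "(x, y) \<in> res H (c * a) \<longleftrightarrow> (x * c, y) \<in> res H a" for x y a
      by (simp_all add: res_def mult.assoc)
    have "(x, y) \<in> res H (a * c) \<longleftrightarrow> (x, y) \<in> res H (b * c)"
      "(x, y) \<in> res H (c * a) \<longleftrightarrow> (x, y) \<in> res H (c * b)" for x y
      using that by (simp_all only: shift)
    then show ?thesis by (simp add: set_eq_iff split_paired_all)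
  qed
  moreover have "equiv UNIV (P H)"
  proof (rule equivI)
    show "refl_on UNIV (P H)" by (rule refl_onI) (simp_all add: P_def)
    show "sym (P H)" by (rule symI) (simp add: P_def)
    show "trans (P H)" by (rule transI) (simp add: P_def)
  qed simp
  ultimately show ?thesis unfolding mult_congruence_def P_def by blast
qed

lemma quot_mult_classes:
  assumes "mult_congruence r"
  shows "quot_mult r (r `` {a}) (r `` {b}) = r `` {a * b}"
proof (intro set_eqI iffI)
  have equiv: "equiv UNIV r"
    and compat: "\<And>a b c. (a, b) \<in> r \<Longrightarrow> (a * c, b * c) \<in> r \<and> (c * a, c * b) \<in> r"
    using assms by (simp_all add: mult_congruence_def)
  then have trans: "trans r" and refl: "\<And>x. (x, x) \<in> r"
    by (simp_all add: equiv_def refl_on_def)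
  fix z
  {
    assume "z \<in> quot_mult r (r `` {a}) (r `` {b})"
    then obtain x y where "(a, x) \<in> r" "(b, y) \<in> r" "(x * y, z) \<in> r"
      unfolding quot_mult_def by blast
    then show "z \<in> r `` {a * b}"
      using compat trans by (meson ImageI singletonI transD)
  next
    assume "z \<in> r `` {a * b}"
    then show "z \<in> quot_mult r (r `` {a}) (r `` {b})"
      unfolding quot_mult_def using refl by blast
  }
qed

lemma class_mem_annih_quotient_iff:
  fixes r :: "('a::{semigroup_mult, zero} \<times> 'a) set"
  assumes "mult_congruence r"
  shows "r `` {x} \<in> annih (UNIV // r) (quot_mult r) (r `` {0}) (r `` {a}) \<longleftrightarrow> (x * a, 0) \<in> r"
proof -
  have "equiv UNIV r" using assms by (simp add: mult_congruence_def)
  then show ?thesis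
    by (simp add: annih_def quot_mult_classes[OF assms] quotientI eq_equiv_class_iff)
qed

text \<open>The hypotheses are the clauses (2) and (3) of Condition (*), read through the
  description of annihilators in the factor semigroup given by the previous lemma.\<close>

lemma cond_star_quotientI:
  fixes r :: "('a::{comm_monoid_mult, mult_zero} \<times> 'a) set"
  assumes cong: "mult_congruence r"
    and zero_divisor: "\<And>a. (a, 1) \<notin> r \<Longrightarrow> \<exists>x. (x * a, 0) \<in> r \<and> (x, 0) \<notin> r"
    and separating: "\<And>a b. \<forall>x. (x * a, 0) \<in> r \<longleftrightarrow> (x * b, 0) \<in> r \<Longrightarrow> (a, b) \<in> r"
  shows "cond_star (UNIV // r) (quot_mult r)"
proof -
  define c where "c a = r `` {a}" for a
  have equiv: "equiv UNIV r" using cong by (simp add: mult_congruence_def)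
  have S: "UNIV // r = range c" by (auto simp: quotient_def c_def)
  define A where "A = annih (range c) (quot_mult r) (c 0)"
  have mult: "quot_mult r (c a) (c b) = c (a * b)" for a b
    unfolding c_def by (rule quot_mult_classes[OF cong])
  have c_eq: "c a = c b \<longleftrightarrow> (a, b) \<in> r" for a b
    unfolding c_def using equiv by (simp add: eq_equiv_class_iff)
  have A_mem: "c x \<in> A (c a) \<longleftrightarrow> (x * a, 0) \<in> r" for x a
    unfolding A_def S[symmetric] c_def by (rule class_mem_annih_quotient_iff[OF cong])
  have nontrivial: "\<forall>s\<in>range c. s \<noteq> c 1 \<longrightarrow> A s \<noteq> {c 0}"
  proof (intro ballI impI)
    fix s assume "s \<in> range c" "s \<noteq> c 1"
    then obtain a where a: "s = c a" "(a, 1) \<notin> r" using c_eq by blast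
    then obtain x where "(x * a, 0) \<in> r" "(x, 0) \<notin> r" using zero_divisor by blast
    then have "c x \<in> A s" "c x \<noteq> c 0" using a A_mem c_eq by simp_all
    then show "A s \<noteq> {c 0}" by blast
  qed
  have injective: "\<forall>s\<in>range c. \<forall>t\<in>range c. A s = A t \<longrightarrow> s = t"
  proof (intro ballI impI)
    fix s t assume "s \<in> range c" "t \<in> range c" and same: "A s = A t"
    then obtain a b where ab: "s = c a" "t = c b" by blast
    have "\<forall>x. (x * a, 0) \<in> r \<longleftrightarrow> (x * b, 0) \<in> r"
      using same A_mem ab by metis
    then show "s = t" using separating c_eq ab by blast
  qed
  have closed: "\<forall>x\<in>range c. \<forall>y\<in>range c. quot_mult r x y \<in> range c"
    and assoc: "\<forall>x\<in>range c. \<forall>y\<in>range c. \<forall>w\<in>range c.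
      quot_mult r (quot_mult r x y) w = quot_mult r x (quot_mult r y w)"
    and comm: "\<forall>x\<in>range c. \<forall>y\<in>range c. quot_mult r x y = quot_mult r y x"
    and unit: "\<forall>x\<in>range c. quot_mult r (c 1) x = x \<and> quot_mult r x (c 1) = x"
    and zero: "\<forall>x\<in>range c. quot_mult r (c 0) x = c 0 \<and> quot_mult r x (c 0) = c 0"
    by (auto simp: mult ac_simps)
  show ?thesis
    unfolding cond_star_def S
  proof (rule conjI[OF closed conjI[OF assoc]], rule bexI[of _ "c 1"], rule bexI[of _ "c 0"])
  qed (intro conjI comm unit zero nontrivial[unfolded A_def] injective[unfolded A_def] rangeI)+
qed

lemma mem_J_iff: "z \<in> J m \<longleftrightarrow> m dvd z"
  by (auto simp: J_def dvd_def)

lemma res_J_eq_iff: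
  fixes m :: "'a::comm_semiring_1"
  shows "res (J m) a = res (J m) b \<longleftrightarrow> (\<forall>x. m dvd x * a \<longleftrightarrow> m dvd x * b)"
proof
  assume "res (J m) a = res (J m) b"
  then have "(x, 1) \<in> res (J m) a \<longleftrightarrow> (x, 1) \<in> res (J m) b" for x by simp
  then show "\<forall>x. m dvd x * a \<longleftrightarrow> m dvd x * b" by (simp add: res_def mem_J_iff)
next
  assume same: "\<forall>x. m dvd x * a \<longleftrightarrow> m dvd x * b"
  have "m dvd x * a * y \<longleftrightarrow> m dvd x * b * y" for x y
    using same[rule_format, of "x * y"] by (simp add: ac_simps)
  then show "res (J m) a = res (J m) b" by (simp add: res_def mem_J_iff)
qed

lemma tau_iff_gcd_eq: "(a, b) \<in> tau m \<longleftrightarrow> gcd a m = gcd b m"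
  unfolding tau_def assoc_el_def
  by (metis (no_types, lifting) case_prod_conv dvd_refl gcd_dvd_antisym mem_Collect_eq)

lemma tau_zero_iff: "(x, 0) \<in> tau m \<longleftrightarrow> m dvd x"
  by (simp add: tau_iff_gcd_eq gcd_proj2_iff)

lemma tau_one_iff: "(a, 1) \<in> tau m \<longleftrightarrow> coprime a m"
  by (simp add: tau_iff_gcd_eq coprime_iff_gcd_eq_1)

lemma tau_eq_P_J:
  fixes m :: "'a::factorial_ring_gcd"
  assumes "m \<noteq> 0"
  shows "tau m = P (J m)"
  by (auto simp: P_def res_J_eq_iff all_dvd_mult_iff_gcd_eq[OF assms] tau_iff_gcd_eq)

theorem theorem3:
  fixes m :: "'a::factorial_ring_gcd"
  assumes "m \<noteq> 0"
  shows "tau m = P (J m) \<and> mult_congruence (tau m) \<and>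
         cond_star (UNIV // tau m) (quot_mult (tau m))"
proof -
  have tau: "tau m = P (J m)" using assms by (rule tau_eq_P_J)
  then have cong: "mult_congruence (tau m)" by (simp add: mult_congruence_P)
  have "cond_star (UNIV // tau m) (quot_mult (tau m))"
  proof (rule cond_star_quotientI[OF cong])
    fix a assume "(a, 1) \<notin> tau m"
    then show "\<exists>x. (x * a, 0) \<in> tau m \<and> (x, 0) \<notin> tau m"
      using zero_divisor_mod_if_not_coprime[OF assms]
      by (simp add: tau_zero_iff tau_one_iff)
  next
    fix a b assume "\<forall>x. (x * a, 0) \<in> tau m \<longleftrightarrow> (x * b, 0) \<in> tau m"
    then have "\<forall>x. m dvd x * a \<longleftrightarrow> m dvd x * b" unfolding tau_zero_iff .
    then show "(a, b) \<in> tau m"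
      using all_dvd_mult_iff_gcd_eq[OF assms] tau_iff_gcd_eq by blast
  qed
  with tau cong show ?thesis by blast
qed

end
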